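(* Let $L$ be a finite multiset of positive integers. If $L$ admits a special linear realization of type $2$, then for every integer $b\geq 2$ the multiset $L\cup\{2^b\}$ also admits a special linear realization of type $2$.
   Context: For a multiset $L$ of positive integers with $|L|=v-1$, each at most $v-1$, a linear realization of $L$ is a Hamiltonian path $[x_0,x_1,\dots,x_{v-1}]$ of the complete graph on $\{0,1,\dots,v-1\}$ such that the multiset $\{|x_i-x_{i+1}| : i=0,\dots,v-2\}$ equals $L$. A linear realization is special of type $2$ if its two endpoints are $0$ and $1$. $\{2^b\}$ denotes the multiset of $b$ copies of $2$, and $\cup$ is multiset union. *)

theory Defs
  imports Main "HOL-Library.Multiset"
begin

definition absdiff :: "nat \<Rightarrow> nat \<Rightarrow> nat" where
  "absdiff a b = (if a \<le> b then b - a else a - b)"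

definition edge_lengths :: "nat list \<Rightarrow> nat multiset" where
  "edge_lengths xs = mset (map (\<lambda>(a, b). absdiff a b) (zip xs (tl xs)))"

text \<open>xs = [x_0,...,x_{v-1}] is a Hamiltonian path of K_v on {0,...,v-1}
  (v = length xs) whose multiset of edge lengths is L.\<close>
definition linear_realization :: "nat multiset \<Rightarrow> nat list \<Rightarrow> bool" where
  "linear_realization L xs \<longleftrightarrow>
     xs \<noteq> [] \<and> distinct xs \<and> set xs = {0..<length xs} \<and> edge_lengths xs = L"

definition special_lr2 :: "nat multiset \<Rightarrow> nat list \<Rightarrow> bool" where
  "special_lr2 L xs \<longleftrightarrow> linear_realization L xs \<and> {hd xs, last xs} = {0, 1}"

definition has_special_lr2 :: "nat multiset \<Rightarrow> bool" where
  "has_special_lr2 L \<longleftrightarrow> (\<exists>xs. special_lr2 L xs)"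

end

theory Submission
  imports Defs
begin

text \<open>Reversing a special realization lets us assume it runs from 0 to 1. Shifting every
  vertex up by one and reversing again gives a path from 2 to 1 on \<open>{1,\<dots>,v}\<close> with the same
  lengths; prepending the new vertex 0 adds exactly one edge of length 2, and the path still
  runs from 0 to 1. Iterating adds any number of 2s.\<close>

lemma edge_lengths_Nil [simp]: "edge_lengths [] = {#}"
  by (simp add: edge_lengths_def)

lemma edge_lengths_singleton [simp]: "edge_lengths [a] = {#}"
  by (simp add: edge_lengths_def)

lemma edge_lengths_Cons_Cons [simp]:
  "edge_lengths (a # b # xs) = add_mset (absdiff a b) (edge_lengths (b # xs))"
  by (simp add: edge_lengths_def)

lemma edge_lengths_Cons:
  "xs \<noteq> [] \<Longrightarrow> edge_lengths (a # xs) = add_mset (absdiff a (hd xs)) (edge_lengths xs)"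
  by (cases xs) auto

lemma edge_lengths_snoc:
  "xs \<noteq> [] \<Longrightarrow> edge_lengths (xs @ [a]) = add_mset (absdiff (last xs) a) (edge_lengths xs)"
  by (induction xs rule: induct_list012) auto

lemma absdiff_commute: "absdiff a b = absdiff b a"
  by (simp add: absdiff_def)

lemma edge_lengths_rev [simp]: "edge_lengths (rev xs) = edge_lengths xs"
proof (induction xs)
  case (Cons x xs)
  show ?case
  proof (cases "xs = []")
    case False
    then show ?thesis
      using Cons.IH by (simp add: edge_lengths_snoc edge_lengths_Cons last_rev absdiff_commute)
  qed simp
qed simp

lemma edge_lengths_map_Suc [simp]: "edge_lengths (map Suc xs) = edge_lengths xs"
  by (induction xs rule: induct_list012) (auto simp: absdiff_def)

lemma linear_realization_rev:
  "linear_realization L xs \<Longrightarrow> linear_realization L (rev xs)"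
  by (simp add: linear_realization_def)

lemma has_special_lr2_iff_from_0_to_1:
  "has_special_lr2 L \<longleftrightarrow> (\<exists>xs. linear_realization L xs \<and> hd xs = 0 \<and> last xs = 1)"
proof
  assume "has_special_lr2 L"
  then obtain xs where lr: "linear_realization L xs" and ends: "{hd xs, last xs} = {0, 1}"
    unfolding has_special_lr2_def special_lr2_def by blast
  then have ne: "xs \<noteq> []" by (simp add: linear_realization_def)
  from ends consider "hd xs = 0" "last xs = 1" | "hd xs = 1" "last xs = 0"
    by (auto simp: doubleton_eq_iff)
  then show "\<exists>xs. linear_realization L xs \<and> hd xs = 0 \<and> last xs = 1"
  proof cases
    case 2
    then show ?thesis
      using lr ne linear_realization_rev by (metis hd_rev last_rev)
  qed (use lr in blast)
qed (auto simp: has_special_lr2_def special_lr2_def)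

lemma linear_realization_add_two:
  assumes lr: "linear_realization L xs" and hd: "hd xs = 0" and last: "last xs = 1"
  defines "ys \<equiv> 0 # map Suc (rev xs)"
  shows "linear_realization (add_mset 2 L) ys" and "hd ys = 0" and "last ys = 1"
proof -
  have ne: "xs \<noteq> []" and dist: "distinct xs" and vertices: "set xs = {0..<length xs}"
    and lengths: "edge_lengths xs = L"
    using lr by (auto simp: linear_realization_def)
  have "hd (map Suc (rev xs)) = 2"
    using ne last by (simp add: hd_map hd_rev)
  then have "edge_lengths ys = add_mset 2 L"
    using ne lengths by (simp add: ys_def edge_lengths_Cons absdiff_def)
  moreover have "set ys = {0..<length ys}"
    using vertices by (simp add: ys_def atLeast0_lessThan_Suc_eq_insert_0)
  moreover have "distinct ys"
    using dist by (auto simp: ys_def distinct_map)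
  ultimately show "linear_realization (add_mset 2 L) ys"
    by (simp add: linear_realization_def ys_def)
  show "hd ys = 0" by (simp add: ys_def)
  show "last ys = 1"
    using ne hd by (simp add: ys_def last_map last_rev)
qed

lemma has_special_lr2_add_two:
  "has_special_lr2 L \<Longrightarrow> has_special_lr2 (add_mset 2 L)"
  using linear_realization_add_two by (meson has_special_lr2_iff_from_0_to_1)

lemma has_special_lr2_add_replicate_two:
  "has_special_lr2 L \<Longrightarrow> has_special_lr2 (L + replicate_mset n 2)"
  by (induction n) (simp_all add: has_special_lr2_add_two)

theorem lemma2p4:
  fixes L :: "nat multiset" and b :: nat
  assumes "\<forall>x \<in># L. 0 < x"
    and "has_special_lr2 L"
    and "2 \<le> b"
  shows "has_special_lr2 (L + replicate_mset b 2)"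
  using assms(2) by (rule has_special_lr2_add_replicate_two)

end
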